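(* Let $K=\operatorname{cone}\{e_1,\dots,e_m\}\subset\mathbb{R}^m$ be a simplicial cone and $L$ a proper cone such that $K$ is an $L$-isotone projection set. Then there exists $\varepsilon\in\mathcal{E}$ such that $K_\varepsilon$ is subdual, $K_\varepsilon$ is an $L$-isotone projection set, and $K_\varepsilon\subset L\subset K_\varepsilon^*$.
   Context: $\mathbb{R}^m$ carries the standard inner product. $\operatorname{cone}\{x_1,\dots,x_m\}=\{\sum t^ix_i:t^i\ge0\}$; it is a simplicial cone when $x_1,\dots,x_m$ are linearly independent. $\mathcal{E}=\{\varepsilon=(\varepsilon^1,\dots,\varepsilon^m)\in\mathbb{R}^m:|\varepsilon^i|=1\}$ and $K_\varepsilon=\operatorname{cone}\{\varepsilon^1e_1,\dots,\varepsilon^me_m\}$. A proper cone is a closed convex cone that is pointed and generating ($K-K=\mathbb{R}^m$). The dual cone is $K^*=\{y:\langle x,y\rangle\ge0\ \forall x\in K\}$; $K$ is subdual if $K\subset K^*$. For a cone $L$, $x\le_L y$ means $y-x\in L$; a closed convex set $D$ is an $L$-isotone projection set if $x\le_L y$ implies $P_Dx\le_L P_Dy$, where $P_D$ is the metric projection onto $D$. *)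

theory Defs
  imports "HOL-Analysis.Analysis"
begin

definition gen_cone :: "('m::finite \<Rightarrow> real ^ 'n) \<Rightarrow> (real ^ 'n) set" where
  "gen_cone x = {y. \<exists>t. (\<forall>i. t i \<ge> 0) \<and> y = (\<Sum>i\<in>UNIV. t i *\<^sub>R x i)}"

definition sign_vectors :: "(real ^ 'm::finite) set" where
  "sign_vectors = {\<epsilon>. \<forall>i. \<bar>\<epsilon> $ i\<bar> = 1}"

definition K_eps :: "real ^ 'm::finite \<Rightarrow> (real ^ 'm) set" where
  "K_eps \<epsilon> = gen_cone (\<lambda>i. (\<epsilon> $ i) *\<^sub>R axis i 1)"

definition proper_cone :: "(real ^ 'm::finite) set \<Rightarrow> bool" where
  "proper_cone L \<longleftrightarrow> closed L \<and> convex L \<and> cone L \<and>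
     L \<inter> uminus ` L = {0} \<and> {x - y | x y. x \<in> L \<and> y \<in> L} = UNIV"

definition dual_cone :: "(real ^ 'm::finite) set \<Rightarrow> (real ^ 'm) set" where
  "dual_cone K = {y. \<forall>x\<in>K. inner x y \<ge> 0}"

definition subdual :: "(real ^ 'm::finite) set \<Rightarrow> bool" where
  "subdual K \<longleftrightarrow> K \<subseteq> dual_cone K"

definition cone_le :: "(real ^ 'm::finite) set \<Rightarrow> real ^ 'm \<Rightarrow> real ^ 'm \<Rightarrow> bool" where
  "cone_le L x y \<longleftrightarrow> y - x \<in> L"

text \<open>D is an L-isotone projection set: D closed convex (nonempty, so that P_D is defined)
  and the metric projection closest_point D is monotone w.r.t. <=_L.\<close>
definition isotone_projection_set :: "(real ^ 'm::finite) set \<Rightarrow> (real ^ 'm) set \<Rightarrow> bool" where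
  "isotone_projection_set L D \<longleftrightarrow> closed D \<and> convex D \<and> D \<noteq> {} \<and>
     (\<forall>x y. cone_le L x y \<longrightarrow> cone_le L (closest_point D x) (closest_point D y))"

end

theory Submission
  imports Defs
begin

text \<open>
  Isotonicity of the projection onto the nonnegative orthant, \<open>P x = x\<^sup>+\<close>, forces every
  \<open>u \<in> L\<close> to have all its coordinate pieces \<open>u\<^sub>j e\<^sub>j\<close> in \<open>L\<close>: compare \<open>x\<close> and \<open>x + u\<close> for an
  \<open>x\<close> that is very positive in coordinate \<open>j\<close> and very negative elsewhere. Since \<open>L\<close> is
  generating, for each \<open>j\<close> one of \<open>\<pm>e\<^sub>j\<close> lies in \<open>L\<close>, and since \<open>L\<close> is pointed only one of them
  does; hence \<open>L\<close> is exactly a signed orthant \<open>K\<^sub>\<epsilon>\<close>. Signed orthants are self-dual and the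
  projection onto them acts coordinatewise, which gives the remaining properties.
\<close>

definition signed_orthant :: "real ^ 'm::finite \<Rightarrow> (real ^ 'm) set" where
  "signed_orthant e = {x. \<forall>i. 0 \<le> e$i * x$i}"

lemma sign_vector_cases:
  assumes "e \<in> sign_vectors"
  shows "e$i = 1 \<or> e$i = -1"
proof -
  have "\<bar>e$i\<bar> = 1" using assms unfolding sign_vectors_def by blast
  then show ?thesis by linarith
qed

lemma sign_vector_mult_self:
  assumes "e \<in> sign_vectors"
  shows "e$i * e$i = 1"
  using sign_vector_cases[OF assms, of i] by auto

lemma K_eps_eq_signed_orthant:
  assumes e: "e \<in> sign_vectors"
  shows "K_eps e = signed_orthant e"
proof
  show "K_eps e \<subseteq> signed_orthant e"
  proof
    fix x assume "x \<in> K_eps e"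
    then obtain t where t: "\<forall>i. t i \<ge> 0" "x = (\<Sum>i\<in>UNIV. t i *\<^sub>R ((e$i) *\<^sub>R axis i 1))"
      unfolding K_eps_def gen_cone_def by auto
    have "e$i * x$i = t i * (e$i * e$i)" for i
      using t(2) by (simp add: sum_component axis_def if_distrib algebra_simps cong: if_cong)
    then show "x \<in> signed_orthant e"
      using t(1) sign_vector_mult_self[OF e] unfolding signed_orthant_def by simp
  qed
next
  show "signed_orthant e \<subseteq> K_eps e"
  proof
    fix x assume x: "x \<in> signed_orthant e"
    have "x$j = (\<Sum>i\<in>UNIV. (e$i * x$i) *\<^sub>R ((e$i) *\<^sub>R axis i 1)) $ j" for j
    proof -
      have "(\<Sum>i\<in>UNIV. (e$i * x$i) *\<^sub>R ((e$i) *\<^sub>R axis i (1::real))) $ j = x$j * (e$j * e$j)"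
        by (simp add: axis_def if_distrib algebra_simps cong: if_cong)
      then show ?thesis using sign_vector_mult_self[OF e] by simp
    qed
    then have "x = (\<Sum>i\<in>UNIV. (e$i * x$i) *\<^sub>R ((e$i) *\<^sub>R axis i 1))"
      by (subst vec_eq_iff) blast
    moreover have "\<forall>i. 0 \<le> e$i * x$i" using x unfolding signed_orthant_def by blast
    ultimately show "x \<in> K_eps e" unfolding K_eps_def gen_cone_def
      by (intro CollectI exI[of _ "\<lambda>i. e$i * x$i"]) simp
  qed
qed

lemma closed_signed_orthant: "closed (signed_orthant e)"
  unfolding signed_orthant_def
  by (intro closed_Collect_all closed_Collect_le continuous_intros)

lemma convex_signed_orthant: "convex (signed_orthant (e::real^'m::finite))"
proof (rule convexI)
  fix x y :: "real^'m" and u v :: real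
  assume x: "x \<in> signed_orthant e" and y: "y \<in> signed_orthant e" and "0 \<le> u" "0 \<le> v"
  then have "0 \<le> u * (e$i * x$i) + v * (e$i * y$i)" for i
    unfolding signed_orthant_def by simp
  then have "0 \<le> e$i * (u *\<^sub>R x + v *\<^sub>R y)$i" for i
    by (simp add: algebra_simps)
  then show "u *\<^sub>R x + v *\<^sub>R y \<in> signed_orthant e"
    unfolding signed_orthant_def by blast
qed

lemma zero_in_signed_orthant: "0 \<in> signed_orthant e"
  unfolding signed_orthant_def by simp

lemma closest_point_signed_orthant:
  assumes e: "e \<in> sign_vectors"
  shows "closest_point (signed_orthant e) x = (\<chi> i. e$i * max 0 (e$i * x$i))"
proof (rule closest_point_unique[OF convex_signed_orthant closed_signed_orthant, symmetric])
  let ?p = "\<chi> i. e$i * max 0 (e$i * x$i)"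
  have "e$i * (e$i * max 0 (e$i * x$i)) = max 0 (e$i * x$i)" for i
    using sign_vector_mult_self[OF e, of i] by (simp add: mult.assoc[symmetric])
  then show "?p \<in> signed_orthant e"
    unfolding signed_orthant_def by (simp only: mem_Collect_eq vec_lambda_beta max.cobounded1 simp_thms)
  show "\<forall>z\<in>signed_orthant e. dist x ?p \<le> dist x z"
  proof
    fix z assume z: "z \<in> signed_orthant e"
    show "dist x ?p \<le> dist x z" unfolding dist_vec_def
    proof (rule L2_set_mono)
      fix i
      have "0 \<le> e$i * z$i" using z unfolding signed_orthant_def by auto
      then show "dist (x$i) (?p$i) \<le> dist (x$i) (z$i)"
        using sign_vector_cases[OF e, of i] unfolding dist_real_def by (auto simp: max_def)
    qed simp
  qed
qed

lemma subdual_signed_orthant: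
  assumes e: "e \<in> sign_vectors"
  shows "subdual (signed_orthant e)"
  unfolding subdual_def
proof
  fix y assume y: "y \<in> signed_orthant e"
  have "0 \<le> inner x y" if x: "x \<in> signed_orthant e" for x
  proof -
    have "0 \<le> (e$i * x$i) * (e$i * y$i)" for i
      using x y unfolding signed_orthant_def by simp
    moreover have "(e$i * x$i) * (e$i * y$i) = x$i * y$i" for i
      using sign_vector_mult_self[OF e, of i] by (simp add: algebra_simps)
    ultimately have "0 \<le> x$i * y$i" for i by metis
    then show ?thesis unfolding inner_vec_def by (simp add: sum_nonneg)
  qed
  then show "y \<in> dual_cone (signed_orthant e)" unfolding dual_cone_def by blast
qed

lemma isotone_projection_signed_orthant:
  assumes e: "e \<in> sign_vectors"
  shows "isotone_projection_set (signed_orthant e) (signed_orthant e)"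
  unfolding isotone_projection_set_def
proof (intro conjI allI impI)
  show "closed (signed_orthant e)" "convex (signed_orthant e)" "signed_orthant e \<noteq> {}"
    using closed_signed_orthant convex_signed_orthant zero_in_signed_orthant by blast+
  fix x y assume "cone_le (signed_orthant e) x y"
  then have "e$i * x$i \<le> e$i * y$i" for i
    unfolding cone_le_def signed_orthant_def by (simp add: algebra_simps)
  then have "max 0 (e$i * x$i) \<le> max 0 (e$i * y$i)" for i
    by (meson max.mono order.refl)
  moreover have "e$i * (e$i * a - e$i * b) = a - b" for i a b
    using sign_vector_mult_self[OF e, of i] by (simp add: algebra_simps)
  ultimately have "0 \<le> e$i * (e$i * max 0 (e$i * y$i) - e$i * max 0 (e$i * x$i))" for i
    by simp
  then show "cone_le (signed_orthant e)
      (closest_point (signed_orthant e) x) (closest_point (signed_orthant e) y)"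
    unfolding cone_le_def closest_point_signed_orthant[OF e]
    unfolding signed_orthant_def by simp
qed

lemma closest_point_nonneg_orthant:
  "closest_point (gen_cone (\<lambda>i::'m::finite. axis i (1::real))) x = (\<chi> i. max 0 (x$i))"
proof -
  have "(\<chi> i. 1) \<in> (sign_vectors :: (real^'m) set)" unfolding sign_vectors_def by simp
  from closest_point_signed_orthant[OF this] K_eps_eq_signed_orthant[OF this]
  show ?thesis unfolding K_eps_def by simp
qed

lemma axis_component_mem_if_isotone_nonneg_orthant:
  assumes iso: "isotone_projection_set L (gen_cone (\<lambda>i::'m::finite. axis i (1::real)))"
    and u: "u \<in> L"
  shows "axis j (u$j) \<in> L"
proof -
  define x :: "real^'m" where "x = (\<chi> i. if i = j then \<bar>u$i\<bar> else - \<bar>u$i\<bar>)"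
  have "cone_le L x (x + u)" using u unfolding cone_le_def by simp
  then have "(\<chi> i. max 0 ((x + u)$i)) - (\<chi> i. max 0 (x$i)) \<in> L"
    using iso unfolding isotone_projection_set_def closest_point_nonneg_orthant cone_le_def
    by blast
  moreover have "(\<chi> i. max 0 ((x + u)$i)) - (\<chi> i. max 0 (x$i)) = axis j (u$j)"
    unfolding vec_eq_iff x_def axis_def by (auto simp: max_def)
  ultimately show ?thesis by simp
qed

lemma convex_cone_if_proper_cone:
  assumes "proper_cone L"
  shows "convex_cone L"
proof -
  have "L \<noteq> {}" using assms unfolding proper_cone_def by blast
  with assms show ?thesis
    unfolding proper_cone_def convex_cone_def conic_def cone_def by blast
qed

lemma gen_cone_subset:
  assumes L: "convex_cone L" and x: "\<And>i. x i \<in> L"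
  shows "gen_cone x \<subseteq> L"
proof
  fix y assume "y \<in> gen_cone x"
  then obtain t where t: "\<And>i. t i \<ge> 0" and y: "y = (\<Sum>i\<in>UNIV. t i *\<^sub>R x i)"
    unfolding gen_cone_def by blast
  have "(\<Sum>i\<in>F. t i *\<^sub>R x i) \<in> L" if "finite F" for F
    using that
  proof (induction F rule: finite_induct)
    case empty
    then show ?case using convex_cone_contains_0[OF L] by simp
  next
    case (insert a F)
    then show ?case using convex_cone_add[OF L] convex_cone_scaleR[OF L t x] by simp
  qed
  then show "y \<in> L" unfolding y by simp
qed

lemma axis_sgn_mem:
  fixes u :: "real^'m::finite"
  assumes L: "convex_cone L" and axis_closed: "\<And>u j. u \<in> L \<Longrightarrow> axis j (u$j) \<in> L"
    and u: "u \<in> L" "u$j \<noteq> 0"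
  shows "axis j (sgn (u$j)) \<in> L"
proof -
  have "(1 / \<bar>u$j\<bar>) *\<^sub>R axis j (u$j) = axis j (sgn (u$j))"
    unfolding vec_eq_iff axis_def using u(2) by (auto simp: sgn_real_def)
  moreover have "(1 / \<bar>u$j\<bar>) *\<^sub>R axis j (u$j) \<in> L"
    using convex_cone_scaleR[OF L _ axis_closed[OF u(1)]] by simp
  ultimately show ?thesis by simp
qed

lemma proper_cone_not_both_axes:
  assumes "proper_cone L" "axis j (s::real) \<in> L" "axis j (-s) \<in> L"
  shows "s = 0"
proof -
  have "axis j s = - axis j (-s)" by (simp add: vec_eq_iff axis_def)
  then have "axis j s \<in> L \<inter> uminus ` L" using assms(2,3) by blast
  then show ?thesis using assms(1) unfolding proper_cone_def by (simp add: axis_eq_0_iff)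
qed

lemma proper_cone_has_axis:
  assumes L: "proper_cone L" and axis_closed: "\<And>u j. u \<in> L \<Longrightarrow> axis j (u$j) \<in> L"
  shows "axis j 1 \<in> L \<or> axis j (-1) \<in> L"
proof -
  have "axis j 1 \<in> {x - y | x y. x \<in> L \<and> y \<in> L}"
    using L unfolding proper_cone_def by simp
  then obtain a b where ab: "axis j 1 = a - b" "a \<in> L" "b \<in> L" by blast
  then have "a$j - b$j = 1" by (metis axis_nth vector_minus_component)
  then obtain u where u: "u \<in> L" "u$j \<noteq> 0"
    using ab(2,3) by (cases "a$j = 0") auto
  then have "sgn (u$j) = 1 \<or> sgn (u$j) = -1" by (auto simp: sgn_real_def)
  then show ?thesis
    using axis_sgn_mem[OF convex_cone_if_proper_cone[OF L] axis_closed u] by auto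
qed

lemma proper_cone_eq_K_eps_if_axis_closed:
  fixes L :: "(real^'m::finite) set"
  assumes L: "proper_cone L" and axis_closed: "\<And>u j. u \<in> L \<Longrightarrow> axis j (u$j) \<in> L"
  shows "\<exists>\<epsilon>\<in>sign_vectors. L = K_eps \<epsilon>"
proof
  define \<epsilon> :: "real^'m" where "\<epsilon> = (\<chi> j. if axis j 1 \<in> L then 1 else -1)"
  show eps: "\<epsilon> \<in> sign_vectors" unfolding \<epsilon>_def sign_vectors_def by simp
  have eps_axis: "axis j (\<epsilon>$j) \<in> L" for j
    using proper_cone_has_axis[OF L axis_closed, of j] unfolding \<epsilon>_def by auto
  have "L \<subseteq> signed_orthant \<epsilon>"
  proof
    fix u assume u: "u \<in> L"
    have "0 \<le> \<epsilon>$j * u$j" for j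
    proof (rule ccontr)
      assume neg: "\<not> 0 \<le> \<epsilon>$j * u$j"
      then have "u$j \<noteq> 0" by auto
      then have "axis j (sgn (u$j)) \<in> L"
        using axis_sgn_mem[OF convex_cone_if_proper_cone[OF L] axis_closed u] by blast
      moreover have "sgn (u$j) = - \<epsilon>$j"
        using neg sign_vector_cases[OF eps, of j] by (auto simp: sgn_real_def mult_less_0_iff)
      ultimately have "axis j (- \<epsilon>$j) \<in> L" by simp
      then have "\<epsilon>$j = 0" using proper_cone_not_both_axes[OF L eps_axis] by blast
      then show False using sign_vector_cases[OF eps, of j] by simp
    qed
    then show "u \<in> signed_orthant \<epsilon>" unfolding signed_orthant_def by blast
  qed
  moreover have "K_eps \<epsilon> \<subseteq> L"
    unfolding K_eps_def
  proof (rule gen_cone_subset[OF convex_cone_if_proper_cone[OF L]])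
    fix i
    have "(\<epsilon>$i) *\<^sub>R axis i (1::real) = axis i (\<epsilon>$i)" by (simp add: vec_eq_iff axis_def)
    then show "(\<epsilon>$i) *\<^sub>R axis i 1 \<in> L" using eps_axis by simp
  qed
  ultimately show "L = K_eps \<epsilon>" using K_eps_eq_signed_orthant[OF eps] by blast
qed

theorem proposition2:
  fixes L :: "(real ^ 'm::finite) set"
  assumes "proper_cone L"
    and "isotone_projection_set L (gen_cone (\<lambda>i::'m. axis i (1::real)))"
  shows "\<exists>\<epsilon>\<in>sign_vectors. subdual (K_eps \<epsilon>) \<and> isotone_projection_set L (K_eps \<epsilon>) \<and>
           K_eps \<epsilon> \<subseteq> L \<and> L \<subseteq> dual_cone (K_eps \<epsilon>)"
proof -
  obtain \<epsilon> where eps: "\<epsilon> \<in> sign_vectors" and L: "L = K_eps \<epsilon>"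
    using proper_cone_eq_K_eps_if_axis_closed[OF assms(1)
        axis_component_mem_if_isotone_nonneg_orthant[OF assms(2)]] by blast
  have "subdual (K_eps \<epsilon>)" "isotone_projection_set (K_eps \<epsilon>) (K_eps \<epsilon>)"
    using subdual_signed_orthant[OF eps] isotone_projection_signed_orthant[OF eps]
    by (simp_all add: K_eps_eq_signed_orthant[OF eps])
  then show ?thesis using eps unfolding L subdual_def by blast
qed

end
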